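(* Let $1\le m\le k\le l$ be integers with $m\mid l-k+1$. Then $$d_m\Big(\frac{\{k-1\}_q!}{g_{l,k-1}}\Big)=\begin{cases}0 & \text{if } m\mid k,\\ 1 & \text{if } m\nmid k.\end{cases}$$ Consequently $d_m\big(\{k\}_q\,\{k-1\}_q!/g_{l,k-1}\big)=1$.
   Context: In $\mathbb{Z}[q,q^{-1}]$ set $\{i\}_q=q^i-1$, $\{i\}_{q,n}=\{i\}_q\cdots\{i-n+1\}_q$ (equal to $1$ for $n=0$), $\{n\}_q!=\{n\}_{q,n}$. For $0\le i\le k\le l$ set $h_{l,k,i}=\{l-i\}_{q,k-i}\{i\}_q!$ and $g_{l,k}=\mathrm{GCD}(h_{l,k,0},\dots,h_{l,k,k})$ (greatest common divisor in the UFD $\mathbb{Z}[q,q^{-1}]$, up to units); $g_{l,k-1}$ divides $\{k-1\}_q!$. For nonzero $a$ and $m\ge 1$, $d_m(a)$ is the largest integer $i$ with $a\in\Phi_m^i\mathbb{Z}[q,q^{-1}]$, $\Phi_m$ the $m$th cyclotomic polynomial. *)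

theory Defs
  imports "HOL-Computational_Algebra.Computational_Algebra"
begin

text \<open>All quantities involved are genuine polynomials in Z[q] with constant term +-1
  (coprime to q), so we work in Z[q] (type int poly) instead of Z[q,q^-1];
  gcds and cyclotomic multiplicities agree up to units.\<close>

text \<open>The m-th cyclotomic polynomial, via q^n - 1 = prod over d dvd n of Phi_d.\<close>
function cyclotomic :: "nat \<Rightarrow> int poly" where
  "cyclotomic n = (if n = 0 then 1 else
     (monom 1 n - 1) div (\<Prod>d\<in>{d. d dvd n \<and> d < n}. cyclotomic d))"
  by auto
termination
  by (relation "measure id") auto

declare cyclotomic.simps[simp del]

definition qint :: "nat \<Rightarrow> int poly" where
  "qint i = monom 1 i - 1"

text \<open>{i}_{q,n} = {i}_q ... {i-n+1}_q (used only with i - n + 1 >= 0)\<close>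
definition qfall :: "nat \<Rightarrow> nat \<Rightarrow> int poly" where
  "qfall i n = (\<Prod>j<n. qint (i - j))"

definition qfact :: "nat \<Rightarrow> int poly" where
  "qfact n = qfall n n"

definition hlki :: "nat \<Rightarrow> nat \<Rightarrow> nat \<Rightarrow> int poly" where
  "hlki l k i = qfall (l - i) (k - i) * qfact i"

definition glk :: "nat \<Rightarrow> nat \<Rightarrow> int poly" where
  "glk l k = Gcd ((\<lambda>i. hlki l k i) ` {0..k})"

definition dm :: "nat \<Rightarrow> int poly \<Rightarrow> nat" where
  "dm m a = multiplicity (cyclotomic m) a"

end

theory Submission
  imports Defs "Jordan_Normal_Form.Char_Poly"
begin

(* Over the complex numbers the m-th cyclotomic polynomial splits as
   Phi_m = prod of (X - z) over the primitive m-th roots of unity z, and it is monic.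
   Since divisibility of an integer polynomial by a monic one may be tested over C,
   Phi_m^c divides a nonzero f in Z[q] iff every primitive m-th root of unity is a root
   of f of order at least c; hence d_m(f) = c as soon as f has order c at all of them.
   Root orders are additive, and q^j - 1 has order [m | j] at a primitive m-th root, so
   {a}_{q,b} has order floor(a/m) - floor((a-b)/m) and {n}_q! has order floor(n/m).
   With n = k - 1 and m | l - n, h_{l,n,i} has order floor((n-i)/m) + floor(i/m); the
   order of a gcd is the minimum of the orders, and an elementary carry argument shows
   that this minimum over 0 <= i <= n is floor(n/m) - [m does not divide k].  Thus
   {k-1}_q!/g_{l,k-1} has order [m does not divide k], and multiplying by {k}_q adds [m | k]. *)

abbreviation cp :: "int poly \<Rightarrow> complex poly" where "cp \<equiv> of_int_poly"

section \<open>Primitive roots of unity\<close>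

definition primitive_roots :: "nat \<Rightarrow> complex set" where
  "primitive_roots n = {z. z ^ n = 1 \<and> (\<forall>d. 0 < d \<and> d < n \<longrightarrow> z ^ d \<noteq> 1)}"

lemma primitive_root_pow_eq_1_iff:
  assumes "0 < n" "z \<in> primitive_roots n"
  shows "z ^ j = 1 \<longleftrightarrow> n dvd j"
proof -
  have zn: "z ^ n = 1" using assms by (simp add: primitive_roots_def)
  have "z ^ j = z ^ (n * (j div n) + j mod n)" by simp
  also have "\<dots> = (z ^ n) ^ (j div n) * z ^ (j mod n)" by (simp only: power_add power_mult)
  finally have reduce: "z ^ j = z ^ (j mod n)" using zn by simp
  show ?thesis
  proof
    assume "z ^ j = 1"
    hence "z ^ (j mod n) = 1" using reduce by simp
    moreover have "j mod n < n" using assms by simp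
    ultimately have "j mod n = 0" using assms unfolding primitive_roots_def by auto
    thus "n dvd j" by auto
  next
    assume "n dvd j" thus "z ^ j = 1" using reduce by simp
  qed
qed

text \<open>Primitive m-th roots exist; this turns the root-order bounds for d_m into an exact value.\<close>
lemma primitive_root_exists:
  assumes "0 < m"
  shows "cis (2 * pi / real m) \<in> primitive_roots m"
proof -
  let ?f = "\<lambda>k. cis (2 * pi * real k / real m)"
  have inj: "inj_on ?f {..<m}" using bij_betw_roots_unity[OF assms] by (simp add: bij_betw_def)
  have pow: "cis (2 * pi / real m) ^ d = ?f d" for d
    by (simp add: DeMoivre mult.commute)
  have "?f m = 1" using assms by (simp add: complex_eq_iff)
  hence "cis (2 * pi / real m) ^ m = 1" by (simp only: pow)
  moreover have "cis (2 * pi / real m) ^ d \<noteq> 1" if "0 < d" "d < m" for d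
  proof
    assume "cis (2 * pi / real m) ^ d = 1"
    hence "?f d = ?f 0" by (simp only: pow) simp
    hence "d = 0" using that by (intro inj_onD[OF inj]) auto
    thus False using that by simp
  qed
  ultimately show ?thesis unfolding primitive_roots_def by auto
qed

lemma primitive_roots_disjoint:
  assumes "0 < d" "0 < e" "z \<in> primitive_roots d" "z \<in> primitive_roots e"
  shows "d = e"
proof (rule dvd_antisym)
  show "d dvd e" using primitive_root_pow_eq_1_iff[OF assms(1,3)] assms(4)
    by (simp add: primitive_roots_def)
  show "e dvd d" using primitive_root_pow_eq_1_iff[OF assms(2,4)] assms(3)
    by (simp add: primitive_roots_def)
qed

lemma roots_unity_partition:
  assumes "0 < n"
  shows "{z::complex. z ^ n = 1} = (\<Union>d\<in>{d. d dvd n}. primitive_roots d)"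
proof (intro equalityI subsetI)
  fix z :: complex assume "z \<in> {z. z ^ n = 1}"
  hence zn: "z ^ n = 1" by simp
  define d where "d = (LEAST d. 0 < d \<and> z ^ d = 1)"
  have d: "0 < d \<and> z ^ d = 1" unfolding d_def by (rule LeastI[of _ n]) (use assms zn in simp)
  have "\<not> (0 < d' \<and> z ^ d' = 1)" if "d' < d" for d'
    using that unfolding d_def by (rule not_less_Least)
  hence zd: "z \<in> primitive_roots d" using d unfolding primitive_roots_def by auto
  have "d dvd n" using primitive_root_pow_eq_1_iff[of d z n] d zd zn by blast
  thus "z \<in> (\<Union>d\<in>{d. d dvd n}. primitive_roots d)" using zd by auto
next
  fix z assume "z \<in> (\<Union>d\<in>{d. d dvd n}. primitive_roots d)"
  then obtain d where dn: "d dvd n" and zd: "z \<in> primitive_roots d" by auto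
  have "0 < d" using dn assms by (cases d) auto
  thus "z \<in> {z. z ^ n = 1}" using primitive_root_pow_eq_1_iff[OF _ zd, of n] dn by simp
qed

lemma finite_primitive_roots:
  assumes "0 < n" shows "finite (primitive_roots n)"
proof (rule finite_subset)
  show "primitive_roots n \<subseteq> {z. z ^ n = 1}" by (auto simp: primitive_roots_def)
  show "finite {z::complex. z ^ n = 1}" using finite_roots_unity[of n] assms by simp
qed

text \<open>Splitting a product over the n-th roots of unity into the primitive n-th roots and
  the primitive d-th roots for the proper divisors d of n; this is the recursion defining
  the cyclotomic polynomials.\<close>
lemma prod_roots_unity_split:
  fixes g :: "complex \<Rightarrow> 'a::comm_monoid_mult"
  assumes "0 < n"
  shows "(\<Prod>z\<in>{z. z ^ n = 1}. g z) =
           (\<Prod>d\<in>{d. d dvd n \<and> d < n}. \<Prod>z\<in>primitive_roots d. g z) * (\<Prod>z\<in>primitive_roots n. g z)"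
proof -
  define D where "D = {d. d dvd n \<and> d < n}"
  have finD: "finite D" unfolding D_def by auto
  have Dpos: "0 < d" if "d \<in> D" for d using that assms unfolding D_def by (auto intro: Nat.gr0I)
  have finU: "finite (\<Union>d\<in>D. primitive_roots d)" using finD Dpos finite_primitive_roots by simp
  have "{d. d dvd n} = insert n D" unfolding D_def using assms dvd_imp_le by force
  hence part: "{z::complex. z ^ n = 1} = (\<Union>d\<in>D. primitive_roots d) \<union> primitive_roots n"
    using roots_unity_partition[OF assms] by auto
  have disj: "(\<Union>d\<in>D. primitive_roots d) \<inter> primitive_roots n = {}"
    using primitive_roots_disjoint[OF Dpos assms] unfolding D_def by fastforce
  have "(\<Prod>z\<in>{z. z ^ n = 1}. g z) =
          (\<Prod>z\<in>(\<Union>d\<in>D. primitive_roots d). g z) * (\<Prod>z\<in>primitive_roots n. g z)"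
    unfolding part by (rule prod.union_disjoint[OF finU finite_primitive_roots[OF assms] disj])
  also have "(\<Prod>z\<in>(\<Union>d\<in>D. primitive_roots d). g z) = (\<Prod>d\<in>D. \<Prod>z\<in>primitive_roots d. g z)"
    by (rule prod.UNION_disjoint) (use finD Dpos finite_primitive_roots primitive_roots_disjoint in blast)+
  finally show ?thesis unfolding D_def .
qed

section \<open>The complex factorisation of the cyclotomic polynomials\<close>

lemma prod_linear_factors_dvd:
  fixes p :: "complex poly"
  assumes "finite S" "p \<noteq> 0" "\<forall>z\<in>S. c \<le> order z p"
  shows "(\<Prod>z\<in>S. [:-z,1:] ^ c) dvd p"
  using assms
proof (induction S rule: finite_induct)
  case empty thus ?case by simp
next
  case (insert x F)
  then obtain g where g: "p = (\<Prod>z\<in>F. [:-z,1:] ^ c) * g" by auto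
  have nz: "(\<Prod>z\<in>F. [:-z,1:] ^ c) * g \<noteq> 0" using g insert by simp
  have "poly (\<Prod>z\<in>F. [:-z,1:] ^ c) x \<noteq> 0" using insert by (auto simp: poly_prod)
  hence "order x p = order x g" using order_mult[OF nz] order_0I g by simp
  hence "[:-x,1:] ^ c dvd g" using insert nz by (simp add: order_divides)
  hence "[:-x,1:] ^ c * (\<Prod>z\<in>F. [:-z,1:] ^ c) dvd (\<Prod>z\<in>F. [:-z,1:] ^ c) * g"
    by (simp add: mult.commute mult_dvd_mono)
  thus ?case using insert g by simp
qed

lemma roots_unity_factorisation:
  assumes "0 < n"
  shows "(monom 1 n - 1 :: complex poly) = (\<Prod>z\<in>{z. z ^ n = 1}. [:-z,1:])"
proof -
  let ?X = "monom 1 n - 1 :: complex poly"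
  let ?P = "\<Prod>z\<in>{z::complex. z ^ n = 1}. [:-z,1:]"
  have fin: "finite {z::complex. z ^ n = 1}" using assms by (intro finite_roots_unity) simp
  have cX: "coeff ?X n = 1" using assms by simp
  hence X0: "?X \<noteq> 0" by (metis coeff_0 zero_neq_one)
  have dX: "degree ?X = n"
  proof (rule antisym)
    show "degree ?X \<le> n" by (rule degree_diff_le) (auto simp: degree_monom_le)
    show "n \<le> degree ?X" using cX by (intro le_degree) simp
  qed
  have "\<forall>z\<in>{z. z ^ n = 1}. 1 \<le> order z ?X"
  proof
    fix z :: complex assume "z \<in> {z. z ^ n = 1}"
    hence "poly ?X z = 0" by (simp add: poly_monom)
    thus "1 \<le> order z ?X" using X0 order_root by (metis less_one not_le)
  qed
  from prod_linear_factors_dvd[OF fin X0 this] obtain g where g: "?X = ?P * g"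
    by auto
  have dP: "degree ?P = n"
    using assms by (subst degree_prod_eq_sum_degree) (auto simp: card_roots_unity_eq)
  have g0: "g \<noteq> 0" and P0: "?P \<noteq> 0" using g X0 by auto
  have "degree ?X = degree ?P + degree g" using g degree_mult_eq[OF P0 g0] by simp
  hence "degree g = 0" using dX dP by simp
  then obtain c where c: "g = [:c:]" using degree0_coeffs by auto
  have "lead_coeff ?P = 1" by (simp add: lead_coeff_prod)
  hence "lead_coeff ?X = c" using g c by (simp add: lead_coeff_mult)
  moreover have "lead_coeff ?X = 1" using dX cX by simp
  ultimately have "g = 1" using c by (simp add: one_pCons)
  thus ?thesis using g by simp
qed

text \<open>Divisibility of an integer polynomial by a monic integer polynomial can be tested
  over the complex numbers (division by a monic polynomial never leaves Z[X]).\<close>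
lemma monic_dvd_from_complex:
  fixes p f :: "int poly"
  assumes lc: "lead_coeff p = 1" and dvd: "cp p dvd cp f"
  shows "p dvd f"
proof -
  have p0: "p \<noteq> 0" using lc by auto
  obtain q r where pdm: "pseudo_divmod f p = (q, r)" by (cases "pseudo_divmod f p") auto
  from pseudo_divmod[OF p0 pdm] lc
  have f: "f = p * q + r" and r: "r = 0 \<or> degree r < degree p" by auto
  have "cp r = cp f - cp p * cp q"
    using f by (simp add: of_int_poly_hom.hom_add of_int_poly_hom.hom_mult)
  hence "cp p dvd cp r" using dvd by simp
  have "r = 0"
  proof (rule ccontr)
    assume "r \<noteq> 0"
    hence "degree p \<le> degree r" using dvd_imp_degree_le[OF \<open>cp p dvd cp r\<close>] by simp
    thus False using r \<open>r \<noteq> 0\<close> by simp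
  qed
  thus ?thesis using f by simp
qed

text \<open>By strong
  induction: X^n - 1 is the product over all n-th roots, the proper divisors account for
  the non-primitive ones, and the exact division in the definition of Phi_n is the
  complex one because the divisor is monic.\<close>
theorem cyclotomic_factorisation:
  "0 < n \<Longrightarrow> cp (cyclotomic n) = (\<Prod>z\<in>primitive_roots n. [:-z,1:])"
proof (induction n rule: less_induct)
  case (less n)
  define D where "D = {d. d dvd n \<and> d < n}"
  define X where "X = (monom 1 n - 1 :: int poly)"
  define P where "P = (\<Prod>d\<in>D. cyclotomic d)"
  have Dpos: "0 < d" if "d \<in> D" for d using that less.prems unfolding D_def by (auto intro: Nat.gr0I)
  have cP: "cp P = (\<Prod>d\<in>D. \<Prod>z\<in>primitive_roots d. [:-z,1:])"
    unfolding P_def of_int_poly_hom.hom_prod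
    by (rule prod.cong) (use less.IH Dpos in \<open>auto simp: D_def\<close>)
  have cX: "cp X = cp P * (\<Prod>z\<in>primitive_roots n. [:-z,1:])"
    unfolding cP X_def D_def
    by (simp add: of_int_poly_hom.hom_minus map_poly_monom roots_unity_factorisation[OF less.prems]
        prod_roots_unity_split[OF less.prems])
  have "lead_coeff (cp P) = 1" unfolding cP by (simp add: lead_coeff_prod)
  hence lcP: "lead_coeff P = 1" by simp
  have "P dvd X" by (rule monic_dvd_from_complex[OF lcP]) (simp add: cX)
  hence "cp P * cp (X div P) = cp P * (\<Prod>z\<in>primitive_roots n. [:-z,1:])"
    using cX by (metis dvd_mult_div_cancel of_int_poly_hom.hom_mult)
  moreover have "cp P \<noteq> 0" using lcP by auto
  moreover have "cyclotomic n = X div P"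
    using less.prems by (subst cyclotomic.simps) (simp add: X_def P_def D_def)
  ultimately show ?case by simp
qed

lemma cyclotomic_monic: "0 < n \<Longrightarrow> lead_coeff (cyclotomic n) = 1"
proof -
  assume n: "0 < n"
  have "lead_coeff (cp (cyclotomic n)) = 1"
    unfolding cyclotomic_factorisation[OF n] by (simp add: lead_coeff_prod)
  thus ?thesis by simp
qed

section \<open>d_m through root orders at primitive m-th roots of unity\<close>

lemma cyclotomic_power_dvd_imp_order:
  assumes "0 < m" "cyclotomic m ^ c dvd f" "f \<noteq> 0" "z \<in> primitive_roots m"
  shows "c \<le> order z (cp f)"
proof -
  have "cp (cyclotomic m ^ c) dvd cp f" using assms(2) by (rule of_int_poly_hom.hom_dvd)
  hence "(\<Prod>z\<in>primitive_roots m. [:-z,1:]) ^ c dvd cp f"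
    by (simp add: of_int_poly_hom.hom_power cyclotomic_factorisation[OF assms(1)])
  moreover have "[:-z,1:] dvd (\<Prod>z\<in>primitive_roots m. [:-z,1:])"
    using assms(4) finite_primitive_roots[OF assms(1)] by (intro dvd_prodI) auto
  ultimately have "[:-z,1:] ^ c dvd cp f" by (meson dvd_power_same dvd_trans)
  thus ?thesis using assms(3) by (simp add: order_divides)
qed

lemma order_imp_cyclotomic_power_dvd:
  assumes "0 < m" "f \<noteq> 0" "\<forall>z\<in>primitive_roots m. c \<le> order z (cp f)"
  shows "cyclotomic m ^ c dvd f"
proof (rule monic_dvd_from_complex)
  show "lead_coeff (cyclotomic m ^ c) = 1"
    by (simp add: lead_coeff_power cyclotomic_monic[OF assms(1)])
  have "(\<Prod>z\<in>primitive_roots m. [:-z,1:] ^ c) dvd cp f"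
    using assms by (intro prod_linear_factors_dvd finite_primitive_roots) auto
  thus "cp (cyclotomic m ^ c) dvd cp f"
    by (simp add: of_int_poly_hom.hom_power cyclotomic_factorisation[OF assms(1)] prod_power_distrib)
qed

lemma dm_eqI:
  assumes "0 < m" "f \<noteq> 0" "\<forall>z\<in>primitive_roots m. order z (cp f) = c"
  shows "dm m f = c"
  unfolding dm_def
proof (rule multiplicity_eqI)
  show "cyclotomic m ^ c dvd f" by (rule order_imp_cyclotomic_power_dvd) (use assms in auto)
  show "\<not> cyclotomic m ^ Suc c dvd f"
  proof
    assume "cyclotomic m ^ Suc c dvd f"
    from cyclotomic_power_dvd_imp_order[OF assms(1) this assms(2) primitive_root_exists[OF assms(1)]]
    show False using assms(3) primitive_root_exists[OF assms(1)] by simp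
  qed
qed

lemma order_cp_mult:
  assumes "f * g \<noteq> 0"
  shows "order z (cp (f * g)) = order z (cp f) + order z (cp g)"
  using assms unfolding of_int_poly_hom.hom_mult by (intro order_mult) simp

lemma order_cp_div:
  assumes "g dvd f" "f \<noteq> 0"
  shows "order z (cp (f div g)) = order z (cp f) - order z (cp g)"
proof -
  have "f = g * (f div g)" using assms(1) by simp
  thus ?thesis using order_cp_mult[of g "f div g" z] assms(2) by (metis add_diff_cancel_left')
qed

lemma order_Gcd_primitive:
  fixes f :: "'a \<Rightarrow> int poly" and c :: "'a \<Rightarrow> nat"
  assumes m: "0 < m" and A: "finite A" "A \<noteq> {}" and nz: "\<And>a. a \<in> A \<Longrightarrow> f a \<noteq> 0"
    and ord: "\<And>a z. a \<in> A \<Longrightarrow> z \<in> primitive_roots m \<Longrightarrow> order z (cp (f a)) = c a"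
    and z: "z \<in> primitive_roots m"
  shows "order z (cp (Gcd (f ` A))) = Min (c ` A)"
proof (rule antisym)
  have "Min (c ` A) \<in> c ` A" using A by (intro Min_in) auto
  then obtain a0 where a0: "a0 \<in> A" "c a0 = Min (c ` A)" by auto
  have G_dvd: "Gcd (f ` A) dvd f a0" using a0 by (intro Gcd_dvd) auto
  hence G0: "Gcd (f ` A) \<noteq> 0" using nz[OF a0(1)] by auto
  have "order z (cp (Gcd (f ` A))) \<le> order z (cp (f a0))"
    using G_dvd nz[OF a0(1)] by (intro dvd_imp_order_le of_int_poly_hom.hom_dvd) simp_all
  thus "order z (cp (Gcd (f ` A))) \<le> Min (c ` A)" using ord[OF a0(1) z] a0 by simp
  have "cyclotomic m ^ Min (c ` A) dvd f a" if "a \<in> A" for a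
    using that A nz ord by (intro order_imp_cyclotomic_power_dvd[OF m]) auto
  hence "cyclotomic m ^ Min (c ` A) dvd Gcd (f ` A)" by (intro Gcd_greatest) auto
  thus "Min (c ` A) \<le> order z (cp (Gcd (f ` A)))"
    by (rule cyclotomic_power_dvd_imp_order[OF m _ G0 z])
qed

section \<open>Root orders of q-integers and q-factorials\<close>

lemma qint_nonzero: "0 < j \<Longrightarrow> qint j \<noteq> 0"
proof
  assume "0 < j" "qint j = 0"
  hence "coeff (qint j) j = 0" by simp
  thus False using \<open>0 < j\<close> by (simp add: qint_def)
qed

lemma order_qint:
  assumes "0 < m" "z \<in> primitive_roots m" "0 < j"
  shows "order z (cp (qint j)) = (if m dvd j then 1 else 0)"
proof -
  have cq: "cp (qint j) = monom 1 j - 1"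
    by (simp add: qint_def of_int_poly_hom.hom_minus map_poly_monom)
  have nz: "cp (qint j) \<noteq> 0" using qint_nonzero[OF assms(3)] by simp
  have "z \<noteq> 0" using assms by (auto simp: primitive_roots_def power_0_left)
  have root_iff: "poly (cp (qint j)) z = 0 \<longleftrightarrow> m dvd j"
    using primitive_root_pow_eq_1_iff[OF assms(1,2)] unfolding cq by (simp add: poly_monom)
  show ?thesis
  proof (cases "m dvd j")
    case True
    have "poly (pderiv (cp (qint j))) z \<noteq> 0"
      unfolding cq using \<open>z \<noteq> 0\<close> assms(3) by (simp add: pderiv_diff pderiv_monom poly_monom)
    hence "order z (pderiv (cp (qint j))) = 0" by (rule order_0I)
    thus ?thesis using order_pderiv[OF nz] root_iff True by simp
  next
    case False
    thus ?thesis using root_iff by (simp add: order_0I)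
  qed
qed

lemma qfall_nonzero: "b \<le> a \<Longrightarrow> qfall a b \<noteq> 0"
  unfolding qfall_def using qint_nonzero by simp

lemma qfact_nonzero: "qfact n \<noteq> 0"
  by (simp add: qfact_def qfall_nonzero)

text \<open>{a}_{q,b} has order floor(a/m) - floor((a-b)/m): one for each multiple of m in
  the range a-b+1, ..., a.\<close>
lemma order_qfall:
  assumes "0 < m" "z \<in> primitive_roots m" "b \<le> a"
  shows "order z (cp (qfall a b)) = a div m - (a - b) div m"
  using assms(3)
proof (induction b)
  case 0 thus ?case by (simp add: qfall_def)
next
  case (Suc b)
  have "qfall a (Suc b) = qfall a b * qint (a - b)" by (simp add: qfall_def)
  hence "order z (cp (qfall a (Suc b))) = order z (cp (qfall a b)) + order z (cp (qint (a - b)))"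
    using qfall_nonzero[of b a] qint_nonzero[of "a - b"] Suc.prems by (simp add: order_cp_mult)
  also have "\<dots> = a div m - (a - b) div m + (if m dvd (a - b) then 1 else 0)"
    using Suc order_qint[OF assms(1,2), of "a - b"] by simp
  also have "\<dots> = a div m - (a - Suc b) div m"
  proof -
    have s: "a - b = Suc (a - Suc b)" using Suc.prems by simp
    have "Suc (a - Suc b) div m \<le> a div m" by (rule div_le_mono) (use Suc.prems in simp)
    thus ?thesis unfolding s by (simp add: div_Suc dvd_eq_mod_eq_0)
  qed
  finally show ?case .
qed

lemma order_qfact:
  assumes "0 < m" "z \<in> primitive_roots m"
  shows "order z (cp (qfact n)) = n div m"
  using order_qfall[OF assms, of n n] by (simp add: qfact_def)

lemma hlki_nonzero: "i \<le> k \<Longrightarrow> k \<le> l \<Longrightarrow> hlki l k i \<noteq> 0"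
  by (simp add: hlki_def qfact_nonzero qfall_nonzero)

lemma order_hlki:
  assumes "0 < m" "z \<in> primitive_roots m" "i \<le> n" "n \<le> l" "m dvd l - n"
  shows "order z (cp (hlki l n i)) = (n - i) div m + i div m"
proof -
  obtain t where t: "l - n = m * t" using assms(5) by auto
  have "order z (cp (hlki l n i)) = order z (cp (qfall (l - i) (n - i))) + order z (cp (qfact i))"
    using hlki_nonzero[OF assms(3,4)] unfolding hlki_def by (intro order_cp_mult) (simp add: hlki_def)
  also have "\<dots> = (l - i) div m - (l - i - (n - i)) div m + i div m"
    using order_qfall[OF assms(1,2)] order_qfact[OF assms(1,2)] assms(3,4) by simp
  also have "(l - i) div m - (l - i - (n - i)) div m = (n - i) div m"
  proof -
    have "l - i = (n - i) + m * t" "l - i - (n - i) = m * t" using t assms(3,4) by simp_all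
    thus ?thesis using assms(1) by simp
  qed
  finally show ?thesis .
qed

section \<open>The minimal root order\<close>

lemma div_add_carry:
  fixes m x y :: nat
  assumes "0 < m"
  shows "(x + y) div m = x div m + y div m + (if m \<le> x mod m + y mod m then 1 else 0)"
proof -
  define s where "s = x mod m + y mod m"
  have "s < 2 * m" using assms by (simp add: s_def add_less_mono mult_2)
  hence "s div m = (if m \<le> s then 1 else 0)"
    using assms by (auto simp: le_div_geq)
  thus ?thesis using div_add1_eq[of x y m] by (simp add: s_def)
qed

text \<open>A carry forces x + y to be at most m - 2 modulo m, so m cannot divide x + y + 1.\<close>
lemma carry_imp_not_dvd_Suc:
  fixes m x y :: nat
  assumes "0 < m" "m \<le> x mod m + y mod m"
  shows "\<not> m dvd Suc (x + y)"
proof -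
  have lt: "x mod m + y mod m + 1 - m < m"
    using mod_less_divisor[OF assms(1), of x] mod_less_divisor[OF assms(1), of y] by linarith
  have "Suc (x + y) mod m = (x mod m + y mod m + 1) mod m"
    by (metis Suc_eq_plus1 mod_add_eq mod_add_left_eq)
  also have "\<dots> = x mod m + y mod m + 1 - m"
    using assms(2) lt by (simp add: le_mod_geq)
  finally show ?thesis using assms by (simp add: dvd_eq_mod_eq_0)
qed

text \<open>The minimum over 0 <= i <= n of floor((n-i)/m) + floor(i/m) equals floor(n/m) when
  m | n + 1, and floor(n/m) - 1 otherwise (attained at i = m - 1).\<close>
lemma Min_floor_split:
  fixes m n :: nat
  assumes "0 < m" "m \<le> Suc n"
  shows "Min ((\<lambda>i. (n - i) div m + i div m) ` {0..n}) = n div m - (if m dvd Suc n then 0 else 1)"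
proof (rule Min_eqI)
  fix v assume "v \<in> (\<lambda>i. (n - i) div m + i div m) ` {0..n}"
  then obtain i where i: "i \<le> n" "v = (n - i) div m + i div m" by auto
  have n: "n = (n - i) + i" using i by simp
  show "n div m - (if m dvd Suc n then 0 else 1) \<le> v"
  proof (cases "m \<le> (n - i) mod m + i mod m")
    case True
    then show ?thesis
      using div_add_carry[OF assms(1), of "n - i" i] carry_imp_not_dvd_Suc[OF assms(1) True] i n
      by simp
  next
    case False
    then show ?thesis using div_add_carry[OF assms(1), of "n - i" i] i n by simp
  qed
next
  show "n div m - (if m dvd Suc n then 0 else 1) \<in> (\<lambda>i. (n - i) div m + i div m) ` {0..n}"
  proof (cases "m dvd Suc n")
    case True
    thus ?thesis by (auto intro!: image_eqI[of _ _ 0])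
  next
    case False
    have "Suc n div m = Suc ((Suc n - m) div m)" using assms by (simp add: le_div_geq)
    moreover have "Suc n div m = n div m" using False by (simp add: div_Suc dvd_eq_mod_eq_0)
    ultimately have "(n - (m - 1)) div m + (m - 1) div m = n div m - 1" using assms by simp
    thus ?thesis using False assms by (auto intro!: image_eqI[of _ _ "m - 1"])
  qed
qed simp

lemma order_glk:
  assumes "0 < m" "z \<in> primitive_roots m" "m \<le> Suc n" "n \<le> l" "m dvd l - n"
  shows "order z (cp (glk l n)) = n div m - (if m dvd Suc n then 0 else 1)"
proof -
  have "order z (cp (Gcd (hlki l n ` {0..n}))) = Min ((\<lambda>i. (n - i) div m + i div m) ` {0..n})"
    using assms by (intro order_Gcd_primitive hlki_nonzero order_hlki) auto
  thus ?thesis unfolding glk_def using Min_floor_split[OF assms(1,3)] by simp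
qed

text \<open>g_{l,n} divides {n}_q!, since h_{l,n,n} = {n}_q! is one of the gcd's arguments.\<close>
lemma glk_dvd_qfact: "glk l n dvd qfact n"
proof -
  have "hlki l n n = qfact n" by (simp add: hlki_def qfall_def)
  thus ?thesis unfolding glk_def by (metis Gcd_dvd atLeastAtMost_iff image_eqI le_refl zero_le)
qed

lemma order_qfact_div_glk:
  assumes m: "0 < m" and z: "z \<in> primitive_roots m" and n: "m \<le> Suc n" "n \<le> l" "m dvd l - n"
  shows "order z (cp (qfact n div glk l n)) = (if m dvd Suc n then 0 else 1)"
proof -
  have "(if m dvd Suc n then 0 else 1) \<le> n div m"
  proof (cases "m dvd Suc n")
    case False
    hence "m \<le> n" using n(1) by (metis dvd_refl le_SucE)
    thus ?thesis using m False by (simp add: div_greater_zero_iff Suc_le_eq)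
  qed simp
  thus ?thesis
    using order_cp_div[OF glk_dvd_qfact qfact_nonzero] order_qfact[OF m z] order_glk[OF m z n] by simp
qed

theorem mainTheorem7:
  fixes m k l :: nat
  assumes "1 \<le> m" "m \<le> k" "k \<le> l" "m dvd (l - k + 1)"
  shows "dm m (qfact (k - 1) div glk l (k - 1)) = (if m dvd k then 0 else 1)
         \<and> dm m (qint k * (qfact (k - 1) div glk l (k - 1))) = 1"
proof -
  define n where "n = k - 1"
  define Q where "Q = qfact n div glk l n"
  have m: "0 < m" and k: "k = Suc n" and n: "m \<le> Suc n" "n \<le> l" "m dvd l - n"
    using assms unfolding n_def by (auto simp: Suc_diff_le)
  have ordQ: "order z (cp Q) = (if m dvd k then 0 else 1)" if "z \<in> primitive_roots m" for z
    unfolding Q_def k by (rule order_qfact_div_glk[OF m that n])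
  have "Q \<noteq> 0"
    using glk_dvd_qfact[of l n] qfact_nonzero unfolding Q_def by (metis dvd_div_mult_self mult_zero_left)
  hence "dm m Q = (if m dvd k then 0 else 1)" using ordQ by (intro dm_eqI[OF m]) auto
  moreover have "dm m (qint k * Q) = 1"
    using ordQ order_qint[OF m] \<open>Q \<noteq> 0\<close> qint_nonzero[of k] order_cp_mult[of "qint k" Q]
    by (intro dm_eqI[OF m]) (auto simp: k)
  ultimately show ?thesis unfolding Q_def n_def by simp
qed

end
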